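(* Let $\sigma:\mathbb{R}\to\mathbb{R}$ be an increasing odd homeomorphism and let $U_\sigma=F_\sigma\circ F_\sigma$. If $p\in\Omega$ is $\sigma$-irrational, then $\|U_\sigma^n(p)\|\leq 2^{-n}\|p\|$ for every $n\geq0$, where $\|(x,y)\|=|x|+|y|$.
   Context: $h_\sigma(x,y)=(x+\sigma^{-1}(y),y)$, $v_\sigma(x,y)=(x,\sigma(x)+y)$, $\Omega=\mathbb{R}^2\setminus\{(0,0)\}$, $X=\{(x,y)\in\Omega:xy\geq0,\ x\neq0\}$, $Y=\{(x,y)\in\Omega:xy\leq0,\ y\neq0\}$, $A=h_\sigma(X)$, $B=v_\sigma(X)$, $C=h_\sigma^{-1}(Y)$, $D=v_\sigma^{-1}(Y)$. The accelerated Euclidean algorithm $F_\sigma$ is defined as follows: if $p\in A$, $F_\sigma(p)=h_\sigma^{-n}(p)$ with $n$ the smallest integer such that $h_\sigma^{-n}(p)\in B$; if $p\in B$, $F_\sigma(p)=v_\sigma^{-n}(p)$ with $n$ the smallest integer such that $v_\sigma^{-n}(p)\in A$; on $Y$ by the analogous formulas (if $p\in C$, $F_\sigma(p)=h_\sigma^{n}(p)$ with $n$ smallest such that $h_\sigma^n(p)\in D$; if $p\in D$, $F_\sigma(p)=v_\sigma^{n}(p)$ with $n$ smallest such that $v_\sigma^n(p)\in C$). The $\sigma$-rational lines are the axes $Ox,Oy$, the sets $m(Ox)$ with $m$ in the monoid generated by $h_\sigma,v_\sigma$, and the sets $m(Oy)$ with $m$ in the monoid generated by $h_\sigma^{-1},v_\sigma^{-1}$;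 a point is $\sigma$-irrational if it lies on none of them. *)

theory Defs
  imports "HOL-Analysis.Analysis"
begin

type_synonym pt = "real \<times> real"

definition hmap :: "(real \<Rightarrow> real) \<Rightarrow> pt \<Rightarrow> pt" where
  "hmap \<sigma> = (\<lambda>(x, y). (x + inv \<sigma> y, y))"
definition hinv :: "(real \<Rightarrow> real) \<Rightarrow> pt \<Rightarrow> pt" where
  "hinv \<sigma> = (\<lambda>(x, y). (x - inv \<sigma> y, y))"
definition vmap :: "(real \<Rightarrow> real) \<Rightarrow> pt \<Rightarrow> pt" where
  "vmap \<sigma> = (\<lambda>(x, y). (x, \<sigma> x + y))"
definition vinv :: "(real \<Rightarrow> real) \<Rightarrow> pt \<Rightarrow> pt" where
  "vinv \<sigma> = (\<lambda>(x, y). (x, y - \<sigma> x))"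

definition Omega :: "pt set" where
  "Omega = UNIV - {(0, 0)}"
definition Xset :: "pt set" where
  "Xset = {(x, y). (x, y) \<in> Omega \<and> x * y \<ge> 0 \<and> x \<noteq> 0}"
definition Yset :: "pt set" where
  "Yset = {(x, y). (x, y) \<in> Omega \<and> x * y \<le> 0 \<and> y \<noteq> 0}"

definition Aset :: "(real \<Rightarrow> real) \<Rightarrow> pt set" where "Aset \<sigma> = hmap \<sigma> ` Xset"
definition Bset :: "(real \<Rightarrow> real) \<Rightarrow> pt set" where "Bset \<sigma> = vmap \<sigma> ` Xset"
definition Cset :: "(real \<Rightarrow> real) \<Rightarrow> pt set" where "Cset \<sigma> = hinv \<sigma> ` Yset"
definition Dset :: "(real \<Rightarrow> real) \<Rightarrow> pt set" where "Dset \<sigma> = vinv \<sigma> ` Yset"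

definition Fmap :: "(real \<Rightarrow> real) \<Rightarrow> pt \<Rightarrow> pt" where
  "Fmap \<sigma> p =
    (if p \<in> Aset \<sigma> then (hinv \<sigma> ^^ (LEAST n. (hinv \<sigma> ^^ n) p \<in> Bset \<sigma>)) p
     else if p \<in> Bset \<sigma> then (vinv \<sigma> ^^ (LEAST n. (vinv \<sigma> ^^ n) p \<in> Aset \<sigma>)) p
     else if p \<in> Cset \<sigma> then (hmap \<sigma> ^^ (LEAST n. (hmap \<sigma> ^^ n) p \<in> Dset \<sigma>)) p
     else if p \<in> Dset \<sigma> then (vmap \<sigma> ^^ (LEAST n. (vmap \<sigma> ^^ n) p \<in> Cset \<sigma>)) p
     else undefined)"

inductive_set mon_hv :: "(real \<Rightarrow> real) \<Rightarrow> (pt \<Rightarrow> pt) set" for \<sigma> where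
  id: "id \<in> mon_hv \<sigma>"
| h: "m \<in> mon_hv \<sigma> \<Longrightarrow> hmap \<sigma> \<circ> m \<in> mon_hv \<sigma>"
| v: "m \<in> mon_hv \<sigma> \<Longrightarrow> vmap \<sigma> \<circ> m \<in> mon_hv \<sigma>"

inductive_set mon_hv_inv :: "(real \<Rightarrow> real) \<Rightarrow> (pt \<Rightarrow> pt) set" for \<sigma> where
  id: "id \<in> mon_hv_inv \<sigma>"
| h: "m \<in> mon_hv_inv \<sigma> \<Longrightarrow> hinv \<sigma> \<circ> m \<in> mon_hv_inv \<sigma>"
| v: "m \<in> mon_hv_inv \<sigma> \<Longrightarrow> vinv \<sigma> \<circ> m \<in> mon_hv_inv \<sigma>"

definition Ox :: "pt set" where "Ox = {(x, 0) | x. True}"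
definition Oy :: "pt set" where "Oy = {(0, y) | y. True}"

definition rational_lines :: "(real \<Rightarrow> real) \<Rightarrow> pt set set" where
  "rational_lines \<sigma> = {Ox, Oy} \<union> {m ` Ox | m. m \<in> mon_hv \<sigma>} \<union> {m ` Oy | m. m \<in> mon_hv_inv \<sigma>}"

definition sigma_irrational :: "(real \<Rightarrow> real) \<Rightarrow> pt \<Rightarrow> bool" where
  "sigma_irrational \<sigma> p \<longleftrightarrow> (\<forall>L \<in> rational_lines \<sigma>. p \<notin> L)"

definition norm1 :: "pt \<Rightarrow> real" where
  "norm1 = (\<lambda>(x, y). \<bar>x\<bar> + \<bar>y\<bar>)"

end

theory Submission
  imports Defs
begin

text \<open>
  Write \<open>\<tau>\<close> for the inverse of \<open>\<sigma>\<close>. For \<open>b \<noteq> 0\<close> put \<open>x = a / \<tau> b\<close>. The four sets \<open>A, B, C, D\<close>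
  are the regions \<open>x > 1\<close>, \<open>0 < x \<le> 1\<close>, \<open>x \<le> -1\<close> and \<open>-1 < x \<le> 0\<close>, and \<open>h\<^sup>n\<close> shifts \<open>x\<close>
  by \<open>n\<close>; symmetrically, for \<open>a \<noteq> 0\<close> the ratio \<open>b / \<sigma> a\<close> describes them and is shifted by
  \<open>v\<^sup>n\<close>. So one step of \<open>F\<^sub>\<sigma>\<close> keeps one coordinate and replaces the other, \<open>a = x \<tau> b\<close> say, by
  \<open>\<plusminus>r \<tau> b\<close>, where \<open>r \<in> (0, 1]\<close> or \<open>[0, 1)\<close> is \<open>|x|\<close> reduced modulo 1; as \<open>|x| \<ge> 1\<close>,
  \<open>r \<le> |x| / 2\<close>. The step maps \<open>A \<union> C\<close> to \<open>B \<union> D\<close> and back, so two steps halve both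
  coordinates. The iteration never gets stuck because \<open>\<sigma>\<close>-irrational points lie off the axes, and
  irrationality is inherited by \<open>F\<^sub>\<sigma> p\<close> since \<open>p = m (F\<^sub>\<sigma> p)\<close> for a word \<open>m\<close> in one of
  the two monoids.
\<close>

section \<open>Reduction of a real number modulo 1\<close>

lemma Least_diff_in_Ico:
  fixes x :: real
  assumes "1 \<le> x"
  obtains n :: nat
  where "(LEAST k::nat. x - k \<in> {0..<1}) = n" "x - n \<in> {0..<1}" "\<bar>x - n\<bar> \<le> \<bar>x\<bar> / 2"
proof
  define n where "n = nat \<lfloor>x\<rfloor>"
  have "1 \<le> \<lfloor>x\<rfloor>" using assms by simp
  then have n: "real n = \<lfloor>x\<rfloor>" "1 \<le> n" unfolding n_def by linarith+
  show in_Ico: "x - n \<in> {0..<1}" using n(1) by simp linarith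
  show "\<bar>x - n\<bar> \<le> \<bar>x\<bar> / 2" using in_Ico n(2) by simp
  show "(LEAST k::nat. x - k \<in> {0..<1}) = n"
  proof (rule Least_equality)
    fix k :: nat assume "x - k \<in> {0..<1}"
    then have "\<lfloor>x\<rfloor> = int k" by (intro floor_unique) auto
    then show "n \<le> k" by (simp add: n_def)
  qed (fact in_Ico)
qed

lemma Least_diff_in_Ioc:
  fixes x :: real
  assumes "1 < x"
  obtains n :: nat
  where "(LEAST k::nat. x - k \<in> {0<..1}) = n" "x - n \<in> {0<..1}" "\<bar>x - n\<bar> \<le> \<bar>x\<bar> / 2"
proof
  define n where "n = nat (\<lceil>x\<rceil> - 1)"
  have "1 < \<lceil>x\<rceil>" using assms by simp
  then have n: "real n = \<lceil>x\<rceil> - 1" "1 \<le> n" unfolding n_def by linarith+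
  show in_Ioc: "x - n \<in> {0<..1}" using n(1) ceiling_correct[of x] by simp
  show "\<bar>x - n\<bar> \<le> \<bar>x\<bar> / 2" using in_Ioc n(2) by simp
  show "(LEAST k::nat. x - k \<in> {0<..1}) = n"
  proof (rule Least_equality)
    fix k :: nat assume "x - k \<in> {0<..1}"
    then have "\<lceil>x\<rceil> = int k + 1" by (intro ceiling_unique) auto
    then show "n \<le> k" by (simp add: n_def)
  qed (fact in_Ioc)
qed

lemma abs_diff_mult_le_half:
  fixes t d r :: real
  assumes "d \<noteq> 0" "\<bar>t / d - r\<bar> \<le> \<bar>t / d\<bar> / 2"
  shows "\<bar>t - r * d\<bar> \<le> \<bar>t\<bar> / 2"
proof -
  have "\<bar>t - r * d\<bar> = \<bar>d\<bar> * \<bar>t / d - r\<bar>"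
    using assms(1) by (simp add: abs_mult[symmetric] algebra_simps)
  also have "\<dots> \<le> \<bar>d\<bar> * (\<bar>t / d\<bar> / 2)"
    using assms(2) by (rule mult_left_mono) simp
  also have "\<dots> = \<bar>t\<bar> / 2"
    using assms(1) by (simp add: abs_divide)
  finally show ?thesis .
qed

lemma mem_image_iff_inverse:
  assumes "\<And>q. f (g q) = q" "\<And>q. g (f q) = q"
  shows "q \<in> f ` S \<longleftrightarrow> g q \<in> S"
  by (metis assms image_iff)

lemma hinv_funpow: "(hinv \<sigma> ^^ k) (a, b) = (a - real k * inv \<sigma> b, b)"
  by (induction k) (auto simp: hinv_def algebra_simps)

lemma hmap_funpow: "(hmap \<sigma> ^^ k) (a, b) = (a + real k * inv \<sigma> b, b)"
  by (induction k) (auto simp: hmap_def algebra_simps)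

lemma vinv_funpow: "(vinv \<sigma> ^^ k) (a, b) = (a, b - real k * \<sigma> a)"
  by (induction k) (auto simp: vinv_def algebra_simps)

lemma vmap_funpow: "(vmap \<sigma> ^^ k) (a, b) = (a, b + real k * \<sigma> a)"
  by (induction k) (auto simp: vmap_def algebra_simps)

lemma Xset_iff: "(x, y) \<in> Xset \<longleftrightarrow> x \<noteq> 0 \<and> 0 \<le> x * y"
  by (auto simp: Xset_def Omega_def)

lemma Yset_iff: "(x, y) \<in> Yset \<longleftrightarrow> y \<noteq> 0 \<and> x * y \<le> 0"
  by (auto simp: Yset_def Omega_def)

lemma Aset_iff: "(a, b) \<in> Aset \<sigma> \<longleftrightarrow> a \<noteq> inv \<sigma> b \<and> 0 \<le> (a - inv \<sigma> b) * b"
  unfolding Aset_def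
  by (subst mem_image_iff_inverse[of _ "hinv \<sigma>"]) (auto simp: hmap_def hinv_def Xset_iff)

lemma Bset_iff: "(a, b) \<in> Bset \<sigma> \<longleftrightarrow> a \<noteq> 0 \<and> 0 \<le> a * (b - \<sigma> a)"
  unfolding Bset_def
  by (subst mem_image_iff_inverse[of _ "vinv \<sigma>"]) (auto simp: vmap_def vinv_def Xset_iff)

lemma Cset_iff: "(a, b) \<in> Cset \<sigma> \<longleftrightarrow> b \<noteq> 0 \<and> (a + inv \<sigma> b) * b \<le> 0"
  unfolding Cset_def
  by (subst mem_image_iff_inverse[of _ "hmap \<sigma>"]) (auto simp: hmap_def hinv_def Yset_iff)

lemma Dset_iff: "(a, b) \<in> Dset \<sigma> \<longleftrightarrow> b + \<sigma> a \<noteq> 0 \<and> a * (b + \<sigma> a) \<le> 0"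
  unfolding Dset_def
  by (subst mem_image_iff_inverse[of _ "vmap \<sigma>"]) (auto simp: vmap_def vinv_def Yset_iff add.commute)

lemma funpow_mem_closed:
  assumes "id \<in> M" "\<And>m. m \<in> M \<Longrightarrow> g \<circ> m \<in> M"
  shows "g ^^ n \<in> M"
  by (induction n) (simp_all only: funpow.simps assms)

lemma mon_hv_comp: "m \<in> mon_hv \<sigma> \<Longrightarrow> m' \<in> mon_hv \<sigma> \<Longrightarrow> m \<circ> m' \<in> mon_hv \<sigma>"
  by (induction m rule: mon_hv.induct) (auto simp: comp_assoc intro: mon_hv.intros)

lemma mon_hv_inv_comp: "m \<in> mon_hv_inv \<sigma> \<Longrightarrow> m' \<in> mon_hv_inv \<sigma> \<Longrightarrow> m \<circ> m' \<in> mon_hv_inv \<sigma>"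
  by (induction m rule: mon_hv_inv.induct) (auto simp: comp_assoc intro: mon_hv_inv.intros)

lemma rational_lines_cases:
  assumes "L \<in> rational_lines \<sigma>"
  obtains (hv) m where "m \<in> mon_hv \<sigma>" "L = m ` Ox"
    | (hv_inv) m where "m \<in> mon_hv_inv \<sigma>" "L = m ` Oy"
proof -
  have "Ox = id ` Ox" "Oy = id ` Oy" by simp_all
  then show thesis
    using assms that mon_hv.id mon_hv_inv.id unfolding rational_lines_def by blast
qed

lemma mon_hv_image_Ox_rational: "m \<in> mon_hv \<sigma> \<Longrightarrow> m ` Ox \<in> rational_lines \<sigma>"
  unfolding rational_lines_def by auto

lemma mon_hv_inv_image_Oy_rational: "m \<in> mon_hv_inv \<sigma> \<Longrightarrow> m ` Oy \<in> rational_lines \<sigma>"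
  unfolding rational_lines_def by auto

lemma sigma_irrational_nonzero:
  assumes "sigma_irrational \<sigma> q" shows "fst q \<noteq> 0" "snd q \<noteq> 0"
proof -
  have "Ox \<in> rational_lines \<sigma>" "Oy \<in> rational_lines \<sigma>" by (simp_all add: rational_lines_def)
  with assms have "q \<notin> Ox" "q \<notin> Oy" unfolding sigma_irrational_def by blast+
  then show "fst q \<noteq> 0" "snd q \<noteq> 0" by (cases q; auto simp: Ox_def Oy_def)+
qed

locale odd_increasing_bijection =
  fixes \<sigma> :: "real \<Rightarrow> real"
  assumes strict_mono: "strict_mono \<sigma>"
    and odd: "\<And>x. \<sigma> (- x) = - \<sigma> x"
    and bij: "bij \<sigma>"
begin

lemma less_iff [simp]: "\<sigma> x < \<sigma> y \<longleftrightarrow> x < y"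
  using strict_mono by (simp add: strict_mono_less)

lemma le_iff [simp]: "\<sigma> x \<le> \<sigma> y \<longleftrightarrow> x \<le> y"
  using strict_mono by (simp add: strict_mono_less_eq)

lemma zero [simp]: "\<sigma> 0 = 0"
  using odd[of 0] by simp

lemma f_inv [simp]: "\<sigma> (inv \<sigma> y) = y"
  using bij by (simp add: bij_is_surj surj_f_inv_f)

lemma inv_f [simp]: "inv \<sigma> (\<sigma> x) = x"
  using bij by (simp add: bij_is_inj)

lemma inv_zero [simp]: "inv \<sigma> 0 = 0"
  by (metis inv_f zero)

lemma inv_less_iff [simp]: "inv \<sigma> x < inv \<sigma> y \<longleftrightarrow> x < y"
  using less_iff[of "inv \<sigma> x" "inv \<sigma> y"] by simp

lemma inv_le_iff [simp]: "inv \<sigma> x \<le> inv \<sigma> y \<longleftrightarrow> x \<le> y"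
  using le_iff[of "inv \<sigma> x" "inv \<sigma> y"] by simp

lemma inv_eq_iff [simp]: "inv \<sigma> x = inv \<sigma> y \<longleftrightarrow> x = y"
  by (metis f_inv)

lemma inv_odd: "inv \<sigma> (- y) = - inv \<sigma> y"
  by (metis f_inv inv_f odd)

lemma sign_iffs [simp]:
  "0 < \<sigma> x \<longleftrightarrow> 0 < x" "\<sigma> x < 0 \<longleftrightarrow> x < 0" "0 \<le> \<sigma> x \<longleftrightarrow> 0 \<le> x" "\<sigma> x \<le> 0 \<longleftrightarrow> x \<le> 0"
  "\<sigma> x = 0 \<longleftrightarrow> x = 0"
  using less_iff[of 0 x] less_iff[of x 0] le_iff[of 0 x] le_iff[of x 0] by auto

lemma inv_sign_iffs [simp]:
  "0 < inv \<sigma> y \<longleftrightarrow> 0 < y" "inv \<sigma> y < 0 \<longleftrightarrow> y < 0" "0 \<le> inv \<sigma> y \<longleftrightarrow> 0 \<le> y"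
  "inv \<sigma> y \<le> 0 \<longleftrightarrow> y \<le> 0" "inv \<sigma> y = 0 \<longleftrightarrow> y = 0"
  using sign_iffs[of "inv \<sigma> y"] by simp_all

lemma sum_sign_iffs:
  "\<sigma> x + \<sigma> y < 0 \<longleftrightarrow> x + y < 0" "\<sigma> x + \<sigma> y \<le> 0 \<longleftrightarrow> x + y \<le> 0"
  "0 \<le> \<sigma> x + \<sigma> y \<longleftrightarrow> 0 \<le> x + y" "\<sigma> x + \<sigma> y = 0 \<longleftrightarrow> x + y = 0"
proof -
  have "\<sigma> x + \<sigma> y = \<sigma> x - \<sigma> (- y)" by (simp add: odd)
  moreover have "\<sigma> x = \<sigma> (- y) \<longleftrightarrow> x = - y" by (metis inv_f)
  ultimately show "\<sigma> x + \<sigma> y < 0 \<longleftrightarrow> x + y < 0" "\<sigma> x + \<sigma> y \<le> 0 \<longleftrightarrow> x + y \<le> 0"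
    "0 \<le> \<sigma> x + \<sigma> y \<longleftrightarrow> 0 \<le> x + y" "\<sigma> x + \<sigma> y = 0 \<longleftrightarrow> x + y = 0" by auto
qed

lemma mult_self_nonneg: "0 \<le> x * \<sigma> x"
  by (cases x "0::real" rule: linorder_cases) (auto simp: zero_le_mult_iff)

lemma mult_inv_nonneg: "0 \<le> y * inv \<sigma> y"
  by (cases y "0::real" rule: linorder_cases) (auto simp: zero_le_mult_iff)

section \<open>The sets in terms of slope ratios\<close>

lemma Aset_iff_ratio_h:
  assumes "b \<noteq> 0" shows "(a, b) \<in> Aset \<sigma> \<longleftrightarrow> a / inv \<sigma> b \<in> {1<..}"
proof -
  obtain d where b: "b = \<sigma> d" and "d \<noteq> 0" using assms by (metis f_inv sign_iffs(5))
  then show ?thesis unfolding Aset_iff b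
    by (cases d "0::real" rule: linorder_cases) (auto simp: zero_le_mult_iff less_divide_eq_1)
qed

lemma Bset_iff_ratio_h:
  assumes "b \<noteq> 0" shows "(a, b) \<in> Bset \<sigma> \<longleftrightarrow> a / inv \<sigma> b \<in> {0<..1}"
proof -
  obtain d where b: "b = \<sigma> d" and "d \<noteq> 0" using assms by (metis f_inv sign_iffs(5))
  then show ?thesis unfolding Bset_iff b
    by (cases d "0::real" rule: linorder_cases; cases a "0::real" rule: linorder_cases)
      (auto simp: zero_le_mult_iff divide_le_eq_1 zero_less_divide_iff)
qed

lemma Cset_iff_ratio_h:
  assumes "b \<noteq> 0" shows "(a, b) \<in> Cset \<sigma> \<longleftrightarrow> - a / inv \<sigma> b \<in> {1..}"
proof -
  obtain d where b: "b = \<sigma> d" and "d \<noteq> 0" using assms by (metis f_inv sign_iffs(5))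
  then show ?thesis unfolding Cset_iff b
    by (cases d "0::real" rule: linorder_cases) (auto simp: mult_le_0_iff le_divide_eq divide_le_eq)
qed

lemma Dset_iff_ratio_h:
  assumes "b \<noteq> 0" shows "(a, b) \<in> Dset \<sigma> \<longleftrightarrow> - a / inv \<sigma> b \<in> {0..<1}"
proof -
  obtain d where b: "b = \<sigma> d" and "d \<noteq> 0" using assms by (metis f_inv sign_iffs(5))
  then show ?thesis unfolding Dset_iff b
    by (cases d "0::real" rule: linorder_cases; cases "d + a" "0::real" rule: linorder_cases)
      (auto simp: mult_le_0_iff sum_sign_iffs le_divide_eq divide_le_eq divide_less_eq
        less_divide_eq)
qed

lemma Aset_iff_ratio_v:
  assumes "a \<noteq> 0" shows "(a, b) \<in> Aset \<sigma> \<longleftrightarrow> b / \<sigma> a \<in> {0..<1}"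
proof -
  obtain e where a: "a = inv \<sigma> e" and "e \<noteq> 0" using assms by (metis inv_f sign_iffs(5))
  then show ?thesis unfolding Aset_iff a
    by (cases e "0::real" rule: linorder_cases; cases b e rule: linorder_cases)
      (auto simp: zero_le_mult_iff divide_less_eq le_divide_eq)
qed

lemma Bset_iff_ratio_v:
  assumes "a \<noteq> 0" shows "(a, b) \<in> Bset \<sigma> \<longleftrightarrow> b / \<sigma> a \<in> {1..}"
proof -
  obtain e where a: "a = inv \<sigma> e" and "e \<noteq> 0" using assms by (metis inv_f sign_iffs(5))
  then show ?thesis unfolding Bset_iff a
    by (cases e "0::real" rule: linorder_cases) (auto simp: zero_le_mult_iff le_divide_eq)
qed

lemma Cset_iff_ratio_v:
  assumes "a \<noteq> 0" shows "(a, b) \<in> Cset \<sigma> \<longleftrightarrow> - b / \<sigma> a \<in> {0<..1}"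
proof -
  obtain e where a: "a = inv \<sigma> e" and "e \<noteq> 0" using assms by (metis inv_f sign_iffs(5))
  have "inv \<sigma> e + inv \<sigma> b = inv \<sigma> b - inv \<sigma> (- e)" by (simp add: inv_odd)
  then have "inv \<sigma> e + inv \<sigma> b \<le> 0 \<longleftrightarrow> b \<le> - e" "0 \<le> inv \<sigma> e + inv \<sigma> b \<longleftrightarrow> - e \<le> b"
    "inv \<sigma> e + inv \<sigma> b = 0 \<longleftrightarrow> b = - e"
    by auto
  with \<open>e \<noteq> 0\<close> show ?thesis unfolding Cset_iff a
    by (cases e "0::real" rule: linorder_cases; cases b "0::real" rule: linorder_cases)
      (auto simp: mult_le_0_iff divide_le_eq less_divide_eq divide_less_eq le_divide_eq)
qed

lemma Dset_iff_ratio_v: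
  assumes "a \<noteq> 0" shows "(a, b) \<in> Dset \<sigma> \<longleftrightarrow> - b / \<sigma> a \<in> {1<..}"
proof -
  obtain e where a: "a = inv \<sigma> e" and "e \<noteq> 0" using assms by (metis inv_f sign_iffs(5))
  then show ?thesis unfolding Dset_iff a
    by (cases e "0::real" rule: linorder_cases) (auto simp: mult_le_0_iff divide_less_eq)
qed

section \<open>Irrationality is inherited by \<open>F\<^sub>\<sigma> p\<close>\<close>

lemma hmap_mem_Xset:
  assumes "(x, y) \<in> Xset" shows "hmap \<sigma> (x, y) \<in> Xset"
proof -
  have x: "x \<noteq> 0" "0 \<le> x * y" using assms by (simp_all add: Xset_iff)
  have y: "0 \<le> y * inv \<sigma> y" by (rule mult_inv_nonneg)
  have "x + inv \<sigma> y \<noteq> 0"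
  proof
    assume "x + inv \<sigma> y = 0"
    then have "x = - inv \<sigma> y" by simp
    then have "x * y = - (y * inv \<sigma> y)" by simp
    with x y have "y * inv \<sigma> y = 0" by linarith
    with \<open>x + inv \<sigma> y = 0\<close> x show False by auto
  qed
  with x y show ?thesis by (simp add: hmap_def Xset_iff algebra_simps)
qed

lemma vmap_mem_Xset: "(x, y) \<in> Xset \<Longrightarrow> vmap \<sigma> (x, y) \<in> Xset"
  using mult_self_nonneg[of x] by (simp add: vmap_def Xset_iff algebra_simps)

lemma hinv_mem_Yset: "(x, y) \<in> Yset \<Longrightarrow> hinv \<sigma> (x, y) \<in> Yset"
  using mult_inv_nonneg[of y] by (simp add: hinv_def Yset_iff algebra_simps)

lemma vinv_mem_Yset:
  assumes "(x, y) \<in> Yset" shows "vinv \<sigma> (x, y) \<in> Yset"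
proof -
  have y: "y \<noteq> 0" "x * y \<le> 0" using assms by (simp_all add: Yset_iff)
  have x: "0 \<le> x * \<sigma> x" by (rule mult_self_nonneg)
  have "y \<noteq> \<sigma> x"
  proof
    assume "y = \<sigma> x"
    with x y have "x * \<sigma> x = 0" by simp
    with \<open>y = \<sigma> x\<close> y show False by auto
  qed
  with x y show ?thesis by (simp add: vinv_def Yset_iff algebra_simps)
qed

lemma Aset_subset_Xset: "Aset \<sigma> \<subseteq> Xset"
  by (auto simp: Aset_def hmap_mem_Xset)

lemma Bset_subset_Xset: "Bset \<sigma> \<subseteq> Xset"
  by (auto simp: Bset_def vmap_mem_Xset)

lemma Cset_subset_Yset: "Cset \<sigma> \<subseteq> Yset"
  by (auto simp: Cset_def hinv_mem_Yset)

lemma Dset_subset_Yset: "Dset \<sigma> \<subseteq> Yset"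
  by (auto simp: Dset_def vinv_mem_Yset)

lemma mon_hv_nonneg_product:
  "m \<in> mon_hv \<sigma> \<Longrightarrow> 0 \<le> fst q * snd q \<Longrightarrow> 0 \<le> fst (m q) * snd (m q)"
proof (induction m rule: mon_hv.induct)
  case (h m)
  then show ?case using mult_inv_nonneg[of "snd (m q)"]
    by (cases "m q") (simp add: hmap_def algebra_simps)
next
  case (v m)
  then show ?case using mult_self_nonneg[of "fst (m q)"]
    by (cases "m q") (simp add: vmap_def algebra_simps)
qed simp

lemma mon_hv_inv_nonpos_product:
  "m \<in> mon_hv_inv \<sigma> \<Longrightarrow> fst q * snd q \<le> 0 \<Longrightarrow> fst (m q) * snd (m q) \<le> 0"
proof (induction m rule: mon_hv_inv.induct)
  case (h m)
  then show ?case using mult_inv_nonneg[of "snd (m q)"]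
    by (cases "m q") (simp add: hinv_def algebra_simps)
next
  case (v m)
  then show ?case using mult_self_nonneg[of "fst (m q)"]
    by (cases "m q") (simp add: vinv_def algebra_simps)
qed simp

lemma sigma_irrational_preimage_Xset:
  assumes m: "m \<in> mon_hv \<sigma>" and irr: "sigma_irrational \<sigma> (m q)" and q: "q \<in> Xset"
  shows "sigma_irrational \<sigma> q"
proof -
  have not_Ox: "q \<notin> m' ` Ox" if "m' \<in> mon_hv \<sigma>" for m'
  proof
    assume "q \<in> m' ` Ox"
    then have "m q \<in> (m \<circ> m') ` Ox" unfolding image_comp[symmetric] by (rule imageI)
    with irr mon_hv_image_Ox_rational[OF mon_hv_comp[OF m that]] show False
      unfolding sigma_irrational_def by blast
  qed
  \<comment> \<open>\<open>mon_hv_inv\<close> preserves \<open>x y \<le> 0\<close>, so such a point of \<open>Xset\<close> lies on \<open>Ox\<close>\<close>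
  have not_Oy: "q \<notin> m' ` Oy" if "m' \<in> mon_hv_inv \<sigma>" for m'
  proof
    assume "q \<in> m' ` Oy"
    then obtain z where "z \<in> Oy" and "q = m' z" by blast
    then have "fst q * snd q \<le> 0"
      using mon_hv_inv_nonpos_product[OF that] by (auto simp: Oy_def)
    with q have "snd q = 0" by (cases q) (auto simp: Xset_iff)
    then have "q \<in> id ` Ox" by (cases q) (simp add: Ox_def)
    with not_Ox[OF mon_hv.id] show False ..
  qed
  show ?thesis
    unfolding sigma_irrational_def
  proof (intro ballI notI)
    fix L assume "L \<in> rational_lines \<sigma>" "q \<in> L"
    then show False using not_Ox not_Oy by (cases rule: rational_lines_cases) blast+
  qed
qed

lemma sigma_irrational_preimage_Yset:
  assumes m: "m \<in> mon_hv_inv \<sigma>" and irr: "sigma_irrational \<sigma> (m q)" and q: "q \<in> Yset"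
  shows "sigma_irrational \<sigma> q"
proof -
  have not_Oy: "q \<notin> m' ` Oy" if "m' \<in> mon_hv_inv \<sigma>" for m'
  proof
    assume "q \<in> m' ` Oy"
    then have "m q \<in> (m \<circ> m') ` Oy" unfolding image_comp[symmetric] by (rule imageI)
    with irr mon_hv_inv_image_Oy_rational[OF mon_hv_inv_comp[OF m that]] show False
      unfolding sigma_irrational_def by blast
  qed
  have not_Ox: "q \<notin> m' ` Ox" if "m' \<in> mon_hv \<sigma>" for m'
  proof
    assume "q \<in> m' ` Ox"
    then obtain z where "z \<in> Ox" and "q = m' z" by blast
    then have "0 \<le> fst q * snd q"
      using mon_hv_nonneg_product[OF that] by (auto simp: Ox_def)
    with q have "fst q = 0" by (cases q) (auto simp: Yset_iff)
    then have "q \<in> id ` Oy" by (cases q) (simp add: Oy_def)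
    with not_Oy[OF mon_hv_inv.id] show False ..
  qed
  show ?thesis
    unfolding sigma_irrational_def
  proof (intro ballI notI)
    fix L assume "L \<in> rational_lines \<sigma>" "q \<in> L"
    then show False using not_Ox not_Oy by (cases rule: rational_lines_cases) blast+
  qed
qed

section \<open>One step of the algorithm\<close>

lemma Fmap_Aset:
  assumes p: "(a, b) \<in> Aset \<sigma>" and b: "b \<noteq> 0"
  obtains n where "Fmap \<sigma> (a, b) \<in> Bset \<sigma>" "(hmap \<sigma> ^^ n) (Fmap \<sigma> (a, b)) = (a, b)"
    "snd (Fmap \<sigma> (a, b)) = b" "\<bar>fst (Fmap \<sigma> (a, b))\<bar> \<le> \<bar>a\<bar> / 2"
proof -
  define d where "d = inv \<sigma> b"
  have "d \<noteq> 0" using b by (simp add: d_def)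
  have orbit: "(hinv \<sigma> ^^ k) (a, b) \<in> Bset \<sigma> \<longleftrightarrow> a / d - k \<in> {0<..1}" for k
    using Bset_iff_ratio_h[OF b] \<open>d \<noteq> 0\<close> by (simp add: hinv_funpow diff_divide_distrib flip: d_def)
  have "1 < a / d" using Aset_iff_ratio_h[OF b] p by (simp add: d_def)
  then obtain n where n: "(LEAST k::nat. a / d - k \<in> {0<..1}) = n" "a / d - n \<in> {0<..1}"
    "\<bar>a / d - n\<bar> \<le> \<bar>a / d\<bar> / 2"
    by (rule Least_diff_in_Ioc)
  have "Fmap \<sigma> (a, b) = (hinv \<sigma> ^^ n) (a, b)" using p n(1) by (simp add: Fmap_def orbit)
  then have F: "Fmap \<sigma> (a, b) = (a - n * d, b)" by (simp add: hinv_funpow d_def)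
  show thesis
  proof (rule that)
    show "Fmap \<sigma> (a, b) \<in> Bset \<sigma>" using orbit[of n] n(2) F by (simp add: hinv_funpow d_def)
    show "(hmap \<sigma> ^^ n) (Fmap \<sigma> (a, b)) = (a, b)" by (simp add: F hmap_funpow d_def)
    show "snd (Fmap \<sigma> (a, b)) = b" by (simp add: F)
    show "\<bar>fst (Fmap \<sigma> (a, b))\<bar> \<le> \<bar>a\<bar> / 2"
      using abs_diff_mult_le_half[OF \<open>d \<noteq> 0\<close> n(3)] by (simp add: F)
  qed
qed

lemma Fmap_Bset:
  assumes p: "(a, b) \<in> Bset \<sigma>" and a: "a \<noteq> 0"
  obtains n where "Fmap \<sigma> (a, b) \<in> Aset \<sigma>" "(vmap \<sigma> ^^ n) (Fmap \<sigma> (a, b)) = (a, b)"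
    "fst (Fmap \<sigma> (a, b)) = a" "\<bar>snd (Fmap \<sigma> (a, b))\<bar> \<le> \<bar>b\<bar> / 2"
proof -
  define e where "e = \<sigma> a"
  have "e \<noteq> 0" using a by (simp add: e_def)
  have orbit: "(vinv \<sigma> ^^ k) (a, b) \<in> Aset \<sigma> \<longleftrightarrow> b / e - k \<in> {0..<1}" for k
    using Aset_iff_ratio_v[OF a] \<open>e \<noteq> 0\<close> by (simp add: vinv_funpow diff_divide_distrib flip: e_def)
  have "1 \<le> b / e" using Bset_iff_ratio_v[OF a] p by (simp add: e_def)
  then obtain n where n: "(LEAST k::nat. b / e - k \<in> {0..<1}) = n" "b / e - n \<in> {0..<1}"
    "\<bar>b / e - n\<bar> \<le> \<bar>b / e\<bar> / 2"
    by (rule Least_diff_in_Ico)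
  have "(a, b) \<notin> Aset \<sigma>" using orbit[of 0] \<open>1 \<le> b / e\<close> by simp
  with p n(1) have "Fmap \<sigma> (a, b) = (vinv \<sigma> ^^ n) (a, b)" by (simp add: Fmap_def orbit)
  then have F: "Fmap \<sigma> (a, b) = (a, b - n * e)" by (simp add: vinv_funpow e_def)
  show thesis
  proof (rule that)
    show "Fmap \<sigma> (a, b) \<in> Aset \<sigma>" using orbit[of n] n(2) F by (simp add: vinv_funpow e_def)
    show "(vmap \<sigma> ^^ n) (Fmap \<sigma> (a, b)) = (a, b)" by (simp add: F vmap_funpow e_def)
    show "fst (Fmap \<sigma> (a, b)) = a" by (simp add: F)
    show "\<bar>snd (Fmap \<sigma> (a, b))\<bar> \<le> \<bar>b\<bar> / 2"
      using abs_diff_mult_le_half[OF \<open>e \<noteq> 0\<close> n(3)] by (simp add: F)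
  qed
qed

lemma Fmap_Cset:
  assumes p: "(a, b) \<in> Cset \<sigma>" and b: "b \<noteq> 0"
  obtains n where "Fmap \<sigma> (a, b) \<in> Dset \<sigma>" "(hinv \<sigma> ^^ n) (Fmap \<sigma> (a, b)) = (a, b)"
    "snd (Fmap \<sigma> (a, b)) = b" "\<bar>fst (Fmap \<sigma> (a, b))\<bar> \<le> \<bar>a\<bar> / 2"
proof -
  \<comment> \<open>with this sign \<open>a / d\<close> decreases by 1 along the \<open>hmap\<close>-orbit, as in the \<open>A\<close>-step\<close>
  define d where "d = - inv \<sigma> b"
  have "d \<noteq> 0" and ib: "inv \<sigma> b = - d" using b by (simp_all add: d_def)
  have orbit: "(hmap \<sigma> ^^ k) (a, b) \<in> Dset \<sigma> \<longleftrightarrow> a / d - k \<in> {0..<1}" for k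
    using Dset_iff_ratio_h[OF b] \<open>d \<noteq> 0\<close> by (simp add: hmap_funpow ib diff_divide_distrib)
  have "1 \<le> a / d" using Cset_iff_ratio_h[OF b] p by (simp add: ib)
  then obtain n where n: "(LEAST k::nat. a / d - k \<in> {0..<1}) = n" "a / d - n \<in> {0..<1}"
    "\<bar>a / d - n\<bar> \<le> \<bar>a / d\<bar> / 2"
    by (rule Least_diff_in_Ico)
  have "(a, b) \<notin> Aset \<sigma>" "(a, b) \<notin> Bset \<sigma>"
    using Aset_iff_ratio_h[OF b] Bset_iff_ratio_h[OF b] \<open>1 \<le> a / d\<close> by (auto simp: ib)
  with p n(1) have "Fmap \<sigma> (a, b) = (hmap \<sigma> ^^ n) (a, b)" by (simp add: Fmap_def orbit)
  then have F: "Fmap \<sigma> (a, b) = (a - n * d, b)" by (simp add: hmap_funpow ib)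
  show thesis
  proof (rule that)
    show "Fmap \<sigma> (a, b) \<in> Dset \<sigma>" using orbit[of n] n(2) F by (simp add: hmap_funpow ib)
    show "(hinv \<sigma> ^^ n) (Fmap \<sigma> (a, b)) = (a, b)" by (simp add: F hinv_funpow ib)
    show "snd (Fmap \<sigma> (a, b)) = b" by (simp add: F)
    show "\<bar>fst (Fmap \<sigma> (a, b))\<bar> \<le> \<bar>a\<bar> / 2"
      using abs_diff_mult_le_half[OF \<open>d \<noteq> 0\<close> n(3)] by (simp add: F)
  qed
qed

lemma Fmap_Dset:
  assumes p: "(a, b) \<in> Dset \<sigma>" and a: "a \<noteq> 0"
  obtains n where "Fmap \<sigma> (a, b) \<in> Cset \<sigma>" "(vinv \<sigma> ^^ n) (Fmap \<sigma> (a, b)) = (a, b)"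
    "fst (Fmap \<sigma> (a, b)) = a" "\<bar>snd (Fmap \<sigma> (a, b))\<bar> \<le> \<bar>b\<bar> / 2"
proof -
  define e where "e = - \<sigma> a"
  have "e \<noteq> 0" and sa: "\<sigma> a = - e" using a by (simp_all add: e_def)
  have orbit: "(vmap \<sigma> ^^ k) (a, b) \<in> Cset \<sigma> \<longleftrightarrow> b / e - k \<in> {0<..1}" for k
    using Cset_iff_ratio_v[OF a] \<open>e \<noteq> 0\<close> by (simp add: vmap_funpow sa diff_divide_distrib)
  have "1 < b / e" using Dset_iff_ratio_v[OF a] p by (simp add: sa)
  then obtain n where n: "(LEAST k::nat. b / e - k \<in> {0<..1}) = n" "b / e - n \<in> {0<..1}"
    "\<bar>b / e - n\<bar> \<le> \<bar>b / e\<bar> / 2"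
    by (rule Least_diff_in_Ioc)
  have "(a, b) \<notin> Aset \<sigma>" "(a, b) \<notin> Bset \<sigma>" "(a, b) \<notin> Cset \<sigma>"
    using Aset_iff_ratio_v[OF a] Bset_iff_ratio_v[OF a] Cset_iff_ratio_v[OF a] \<open>1 < b / e\<close>
    by (auto simp: sa)
  with p n(1) have "Fmap \<sigma> (a, b) = (vmap \<sigma> ^^ n) (a, b)" by (simp add: Fmap_def orbit)
  then have F: "Fmap \<sigma> (a, b) = (a, b - n * e)" by (simp add: vmap_funpow sa)
  show thesis
  proof (rule that)
    show "Fmap \<sigma> (a, b) \<in> Cset \<sigma>" using orbit[of n] n(2) F by (simp add: vmap_funpow sa)
    show "(vinv \<sigma> ^^ n) (Fmap \<sigma> (a, b)) = (a, b)" by (simp add: F vinv_funpow sa)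
    show "fst (Fmap \<sigma> (a, b)) = a" by (simp add: F)
    show "\<bar>snd (Fmap \<sigma> (a, b))\<bar> \<le> \<bar>b\<bar> / 2"
      using abs_diff_mult_le_half[OF \<open>e \<noteq> 0\<close> n(3)] by (simp add: F)
  qed
qed

lemma Aset_Bset_Cset_Dset_cover: "b \<noteq> 0 \<Longrightarrow> (a, b) \<in> Aset \<sigma> \<union> Bset \<sigma> \<union> Cset \<sigma> \<union> Dset \<sigma>"
  by (auto simp: Aset_iff_ratio_h Bset_iff_ratio_h Cset_iff_ratio_h Dset_iff_ratio_h)

lemma Fmap_halves_fst:
  assumes "(a, b) \<in> Aset \<sigma> \<union> Cset \<sigma>" "b \<noteq> 0"
  shows "Fmap \<sigma> (a, b) \<in> Bset \<sigma> \<union> Dset \<sigma> \<and> snd (Fmap \<sigma> (a, b)) = b \<and>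
    \<bar>fst (Fmap \<sigma> (a, b))\<bar> \<le> \<bar>a\<bar> / 2"
  using assms(1)
proof
  assume "(a, b) \<in> Aset \<sigma>"
  then show ?thesis by (rule Fmap_Aset[OF _ assms(2)]) blast
next
  assume "(a, b) \<in> Cset \<sigma>"
  then show ?thesis by (rule Fmap_Cset[OF _ assms(2)]) blast
qed

lemma Fmap_halves_snd:
  assumes "(a, b) \<in> Bset \<sigma> \<union> Dset \<sigma>" "a \<noteq> 0"
  shows "Fmap \<sigma> (a, b) \<in> Aset \<sigma> \<union> Cset \<sigma> \<and> fst (Fmap \<sigma> (a, b)) = a \<and>
    \<bar>snd (Fmap \<sigma> (a, b))\<bar> \<le> \<bar>b\<bar> / 2"
  using assms(1)
proof
  assume "(a, b) \<in> Bset \<sigma>"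
  then show ?thesis by (rule Fmap_Bset[OF _ assms(2)]) blast
next
  assume "(a, b) \<in> Dset \<sigma>"
  then show ?thesis by (rule Fmap_Dset[OF _ assms(2)]) blast
qed

lemma sigma_irrational_Fmap:
  assumes irr: "sigma_irrational \<sigma> p"
  shows "sigma_irrational \<sigma> (Fmap \<sigma> p)"
proof -
  obtain a b where p: "p = (a, b)" by fastforce
  have a: "a \<noteq> 0" and b: "b \<noteq> 0" using sigma_irrational_nonzero[OF irr] by (simp_all add: p)
  have mon: "hmap \<sigma> ^^ n \<in> mon_hv \<sigma>" "vmap \<sigma> ^^ n \<in> mon_hv \<sigma>"
    "hinv \<sigma> ^^ n \<in> mon_hv_inv \<sigma>" "vinv \<sigma> ^^ n \<in> mon_hv_inv \<sigma>" for n
    by (rule funpow_mem_closed; simp add: mon_hv.intros mon_hv_inv.intros)+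
  from Aset_Bset_Cset_Dset_cover[OF b] consider
    "(a, b) \<in> Aset \<sigma>" | "(a, b) \<in> Bset \<sigma>" | "(a, b) \<in> Cset \<sigma>" | "(a, b) \<in> Dset \<sigma>" by blast
  then show ?thesis
  proof cases
    case 1
    then obtain n where "Fmap \<sigma> p \<in> Xset" "(hmap \<sigma> ^^ n) (Fmap \<sigma> p) = p"
      using Fmap_Aset[OF _ b] Bset_subset_Xset unfolding p by blast
    with irr show ?thesis by (metis sigma_irrational_preimage_Xset mon(1))
  next
    case 2
    then obtain n where "Fmap \<sigma> p \<in> Xset" "(vmap \<sigma> ^^ n) (Fmap \<sigma> p) = p"
      using Fmap_Bset[OF _ a] Aset_subset_Xset unfolding p by blast
    with irr show ?thesis by (metis sigma_irrational_preimage_Xset mon(2))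
  next
    case 3
    then obtain n where "Fmap \<sigma> p \<in> Yset" "(hinv \<sigma> ^^ n) (Fmap \<sigma> p) = p"
      using Fmap_Cset[OF _ b] Dset_subset_Yset unfolding p by blast
    with irr show ?thesis by (metis sigma_irrational_preimage_Yset mon(3))
  next
    case 4
    then obtain n where "Fmap \<sigma> p \<in> Yset" "(vinv \<sigma> ^^ n) (Fmap \<sigma> p) = p"
      using Fmap_Dset[OF _ a] Cset_subset_Yset unfolding p by blast
    with irr show ?thesis by (metis sigma_irrational_preimage_Yset mon(4))
  qed
qed

lemma norm1_Fmap_Fmap_le:
  assumes irr: "sigma_irrational \<sigma> p"
  shows "norm1 (Fmap \<sigma> (Fmap \<sigma> p)) \<le> norm1 p / 2"
proof -
  obtain a b where p: "p = (a, b)" by fastforce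
  obtain a' b' where F: "Fmap \<sigma> (a, b) = (a', b')" by fastforce
  obtain a'' b'' where FF: "Fmap \<sigma> (a', b') = (a'', b'')" by fastforce
  have a: "a \<noteq> 0" and b: "b \<noteq> 0" using sigma_irrational_nonzero[OF irr] by (simp_all add: p)
  have a': "a' \<noteq> 0" and b': "b' \<noteq> 0"
    using sigma_irrational_nonzero[OF sigma_irrational_Fmap[OF irr]] by (simp_all add: p F)
  have norms: "norm1 p = \<bar>a\<bar> + \<bar>b\<bar>" "norm1 (Fmap \<sigma> (Fmap \<sigma> p)) = \<bar>a''\<bar> + \<bar>b''\<bar>"
    by (simp_all add: p F FF norm1_def)
  from Aset_Bset_Cset_Dset_cover[OF b]
  consider "(a, b) \<in> Aset \<sigma> \<union> Cset \<sigma>" | "(a, b) \<in> Bset \<sigma> \<union> Dset \<sigma>" by blast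
  then show ?thesis
  proof cases
    case 1
    from Fmap_halves_fst[OF 1 b] have "(a', b') \<in> Bset \<sigma> \<union> Dset \<sigma>" "b' = b" "\<bar>a'\<bar> \<le> \<bar>a\<bar> / 2"
      unfolding F fst_conv snd_conv by blast+
    moreover from Fmap_halves_snd[OF this(1) a'] have "a'' = a'" "\<bar>b''\<bar> \<le> \<bar>b'\<bar> / 2"
      unfolding FF fst_conv snd_conv by blast+
    ultimately show ?thesis unfolding norms by simp
  next
    case 2
    from Fmap_halves_snd[OF 2 a] have "(a', b') \<in> Aset \<sigma> \<union> Cset \<sigma>" "a' = a" "\<bar>b'\<bar> \<le> \<bar>b\<bar> / 2"
      unfolding F fst_conv snd_conv by blast+
    moreover from Fmap_halves_fst[OF this(1) b'] have "b'' = b'" "\<bar>a''\<bar> \<le> \<bar>a'\<bar> / 2"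
      unfolding FF fst_conv snd_conv by blast+
    ultimately show ?thesis unfolding norms by simp
  qed
qed

end

theorem lemma3:
  fixes \<sigma> :: "real \<Rightarrow> real" and p :: "real \<times> real" and n :: nat
  assumes "strict_mono \<sigma>"
    and "\<And>x. \<sigma> (- x) = - \<sigma> x"
    and "bij \<sigma>" and "continuous_on UNIV \<sigma>" and "continuous_on UNIV (inv \<sigma>)"
    and "p \<in> Omega" and "sigma_irrational \<sigma> p"
  shows "norm1 (((Fmap \<sigma> \<circ> Fmap \<sigma>) ^^ n) p) \<le> norm1 p / 2 ^ n"
proof -
  interpret odd_increasing_bijection \<sigma> using assms(1-3) by unfold_locales
  have "sigma_irrational \<sigma> (((Fmap \<sigma> \<circ> Fmap \<sigma>) ^^ n) p) \<and>
    norm1 (((Fmap \<sigma> \<circ> Fmap \<sigma>) ^^ n) p) \<le> norm1 p / 2 ^ n"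
  proof (induction n)
    case 0
    show ?case using assms(7) by simp
  next
    case (Suc n)
    let ?q = "((Fmap \<sigma> \<circ> Fmap \<sigma>) ^^ n) p"
    have q: "sigma_irrational \<sigma> ?q" "norm1 ?q \<le> norm1 p / 2 ^ n" using Suc.IH by blast+
    have step: "((Fmap \<sigma> \<circ> Fmap \<sigma>) ^^ Suc n) p = Fmap \<sigma> (Fmap \<sigma> ?q)"
      by (simp only: funpow.simps comp_apply)
    have "norm1 (Fmap \<sigma> (Fmap \<sigma> ?q)) \<le> norm1 ?q / 2" using norm1_Fmap_Fmap_le[OF q(1)] .
    also have "\<dots> \<le> norm1 p / 2 ^ Suc n" using q(2) by simp
    finally show ?case
      unfolding step using sigma_irrational_Fmap[OF sigma_irrational_Fmap[OF q(1)]] by blast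
  qed
  then show ?thesis ..
qed

end
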